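(* Let $p=a/b$ with $a,b$ positive coprime integers and $b\not\equiv 0\pmod 4$, and set $k'=b$ if $b$ is even, $k'=2b$ if $b$ is odd. Let $(\Delta_L^{(m)})_{m\ge 1}$ satisfy $\Delta_L^{(m+1)}=\Delta_L^{(m)}+1+2p-2\lceil\Delta_L^{(m)}\rceil$ for all $m\ge1$, with $0<|\Delta_L^{(1)}|<1/k'$. Writing $d(t)=\left|\left((t+\tfrac12)\bmod 1\right)-\tfrac12\right|$ for the distance from $t\in\mathbb{R}$ to the nearest integer, we have $$d\big(\Delta_L^{(m)}\big)>\frac{1}{k'}\quad\text{for all } m\in\{2,\dots,k'/2\}\cup\{k'/2+2,\dots,k'\},$$ and $$d\big(\Delta_L^{(k'/2+1)}\big)<\frac{1}{k'} .$$
   Context: $\lceil\cdot\rceil$ denotes the ceiling function and $t\bmod 1\in[0,1)$ the fractional part. Note $k'$ is always even. *)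

theory Defs
  imports Complex_Main
begin

definition dist_int :: "real \<Rightarrow> real" where
  "dist_int t = \<bar>frac (t + 1/2) - 1/2\<bar>"

end

theory Submission
  imports Defs
begin

text \<open>Each step of the recurrence adds \<open>2p\<close> modulo an integer, so
  \<open>\<Delta> m \<equiv> \<Delta> 1 + (m - 1) A / c\<close> modulo 1, where \<open>2p = A / c\<close> in lowest terms
  and \<open>k' = 2c\<close>. For \<open>0 < m - 1 < 2c\<close> the fraction \<open>(m - 1) A / c\<close> is an integer
  exactly when \<open>m - 1 = c\<close>; otherwise it lies at distance at least \<open>1/c\<close> from the
  integers. The perturbation \<open>\<Delta> 1\<close> is smaller than \<open>1/(2c)\<close>, so the distance to the
  nearest integer stays above \<open>1/(2c)\<close> in the first case and equals \<open>|\<Delta> 1| < 1/(2c)\<close>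
  in the second.\<close>

lemma dist_int_round: "dist_int t = \<bar>t - of_int (round t)\<bar>"
  unfolding dist_int_def frac_def round_def by simp

lemma dist_int_le: "dist_int t \<le> \<bar>t - of_int n\<bar>"
  unfolding dist_int_round by (rule round_diff_minimal)

lemma dist_int_add_Ints: "n \<in> \<int> \<Longrightarrow> dist_int (t + n) = dist_int t"
proof -
  assume "n \<in> \<int>"
  then have "frac ((t + 1/2) + n) = frac (t + 1/2)"
    by (rule frac_add_int_right)
  then show ?thesis
    unfolding dist_int_def by (simp add: algebra_simps)
qed

lemma dist_int_of_abs_less: "\<bar>d\<bar> < 1/2 \<Longrightarrow> dist_int d = \<bar>d\<bar>"
  unfolding dist_int_round using round_unique'[of d 0] by simp

lemma dist_int_add_ge: "dist_int s - \<bar>d\<bar> \<le> dist_int (s + d)"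
proof -
  have "dist_int s \<le> \<bar>s - of_int (round (s + d))\<bar>"
    by (rule dist_int_le)
  also have "\<dots> \<le> \<bar>s + d - of_int (round (s + d))\<bar> + \<bar>d\<bar>"
    by linarith
  finally show ?thesis
    unfolding dist_int_round[of "s + d"] by linarith
qed

lemma dist_int_fraction_ge:
  fixes r c :: nat
  assumes "c > 0" and "\<not> c dvd r"
  shows "1 / real c \<le> dist_int (real r / real c)"
proof -
  define n where "n = round (real r / real c)"
  have "int r - n * int c \<noteq> 0"
    using assms(2) by (metis dvd_triv_right eq_iff_diff_eq_0 int_dvd_int_iff)
  then have "1 \<le> \<bar>real_of_int (int r - n * int c)\<bar>"
    by linarith
  also have "\<dots> = real c * dist_int (real r / real c)"
    using assms(1) by (simp add: dist_int_round n_def[symmetric] field_simps abs_mult)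
  finally show ?thesis
    using assms(1) by (simp add: field_simps)
qed

lemma dist_int_perturbed_fraction_gt:
  fixes r c :: nat
  assumes "c > 0" and "\<not> c dvd r" and "e \<in> \<int>" and "\<bar>d\<bar> < 1 / (2 * real c)"
  shows "1 / (2 * real c) < dist_int (real r / real c + e + d)"
proof -
  have "1 / real c \<le> dist_int (real r / real c)"
    using assms(1,2) by (rule dist_int_fraction_ge)
  also have "\<dots> = dist_int (real r / real c + e)"
    using dist_int_add_Ints[OF assms(3)] by simp
  also have "\<dots> - \<bar>d\<bar> \<le> dist_int (real r / real c + e + d)"
    by (rule dist_int_add_ge)
  finally show ?thesis
    using assms(4) by (simp add: field_simps)
qed

lemma dist_int_perturbed_int: "e \<in> \<int> \<Longrightarrow> \<bar>d\<bar> < 1/2 \<Longrightarrow> dist_int (e + d) = \<bar>d\<bar>"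
  using dist_int_add_Ints[of e d] dist_int_of_abs_less by (simp add: add.commute)

lemma recurrence_mod_Ints:
  fixes f :: "nat \<Rightarrow> real"
  assumes "\<And>m. m \<ge> 1 \<Longrightarrow> f (m + 1) - f m - x \<in> \<int>"
  shows "f (n + 1) - f 1 - of_nat n * x \<in> \<int>"
proof (induction n)
  case 0
  then show ?case by simp
next
  case (Suc n)
  have "f (Suc n + 1) - f 1 - of_nat (Suc n) * x
      = (f (n + 2) - f (n + 1) - x) + (f (n + 1) - f 1 - of_nat n * x)"
    by (simp add: algebra_simps)
  also have "\<dots> \<in> \<int>"
    using assms[of "n + 1"] Suc.IH by (intro Ints_add) (simp_all add: numeral_2_eq_2)
  finally show ?case .
qed

lemma twice_ratio_lowest_terms:
  fixes a b :: nat
  assumes "coprime a b"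
  defines "c \<equiv> if even b then b div 2 else b"
  shows "\<exists>A. coprime A c \<and> 2 * (real a / real b) = real A / real c"
proof (cases "even b")
  case True
  then obtain c' where "b = 2 * c'" by blast
  then show ?thesis
    using assms(1) by (intro exI[of _ a]) (simp add: c_def coprime_mult_right_iff)
next
  case False
  then show ?thesis
    using assms(1) by (intro exI[of _ "2 * a"]) (simp add: c_def coprime_mult_left_iff)
qed

lemma not_dvd_mult_below_twice:
  fixes c j A :: nat
  assumes "coprime A c" and "0 < j" and "j < 2 * c" and "j \<noteq> c"
  shows "\<not> c dvd j * A"
proof
  assume "c dvd j * A"
  then obtain q where "j = c * q"
    using assms(1) by (auto simp: coprime_commute coprime_dvd_mult_left_iff)
  moreover have "q < 2"
    using assms(3) \<open>j = c * q\<close> by simp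
  ultimately show False
    using assms(2,4) by (auto simp: less_2_cases_iff)
qed

theorem lemma3:
  fixes a b :: nat and p :: real and k' :: nat and \<Delta> :: "nat \<Rightarrow> real"
  assumes "a > 0" and "b > 0" and "coprime a b" and "\<not> 4 dvd b"
    and "p = real a / real b"
    and "k' = (if even b then b else 2 * b)"
    and "\<And>m. m \<ge> 1 \<Longrightarrow> \<Delta> (m + 1) = \<Delta> m + 1 + 2 * p - 2 * of_int \<lceil>\<Delta> m\<rceil>"
    and "0 < \<bar>\<Delta> 1\<bar>" and "\<bar>\<Delta> 1\<bar> < 1 / real k'"
  shows "(\<forall>m \<in> {2..k' div 2} \<union> {k' div 2 + 2..k'}. dist_int (\<Delta> m) > 1 / real k')
         \<and> dist_int (\<Delta> (k' div 2 + 1)) < 1 / real k'"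
proof -
  define c where "c = k' div 2"
  have k': "k' = 2 * c" and "c > 0" and c: "c = (if even b then b div 2 else b)"
    using assms(2,6) by (auto simp: c_def)
  obtain A where coprime: "coprime A c" and p: "2 * p = real A / real c"
    using twice_ratio_lowest_terms[OF assms(3)] assms(5) c by auto
  have "\<bar>\<Delta> 1\<bar> < 1 / (2 * real c)"
    using assms(9) k' by simp
  have shift: "\<Delta> (j + 1) - \<Delta> 1 - real (j * A) / real c \<in> \<int>" for j
    using recurrence_mod_Ints[of \<Delta> "2 * p" j] assms(7) p by simp
  have far: "dist_int (\<Delta> (j + 1)) > 1 / real k'" if "0 < j" "j < 2 * c" "j \<noteq> c" for j
    using dist_int_perturbed_fraction_gt[OF \<open>c > 0\<close> not_dvd_mult_below_twice[OF coprime that]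
        shift[of j] \<open>\<bar>\<Delta> 1\<bar> < 1 / (2 * real c)\<close>] k'
    by (simp add: algebra_simps)
  have "1 / (2 * real c) \<le> 1/2"
    using \<open>c > 0\<close> by (simp add: field_simps)
  then have "\<bar>\<Delta> 1\<bar> < 1/2"
    using \<open>\<bar>\<Delta> 1\<bar> < 1 / (2 * real c)\<close> by linarith
  moreover have "\<Delta> (c + 1) - \<Delta> 1 \<in> \<int>"
    using shift[of c] \<open>c > 0\<close> Ints_add[OF _ Ints_of_nat[of A]] by force
  ultimately have near: "dist_int (\<Delta> (c + 1)) < 1 / real k'"
    using dist_int_perturbed_int[of "\<Delta> (c + 1) - \<Delta> 1" "\<Delta> 1"] assms(9) by simp
  have "dist_int (\<Delta> m) > 1 / real k'" if "m \<in> {2..c} \<union> {c + 2..k'}" for m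
    using far[of "m - 1"] that k' by auto
  with near show ?thesis
    by (simp add: c_def)
qed

end
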